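(* Let $\mathcal{T}$ be a simplicial tree, $G \leq \mathrm{Aut}(\mathcal{T})$, and let $g_1, g_2, g_3 \in G$ be supported in pairwise disjoint half-trees. Then for every $g \in G$, at least one of the following holds: (1) $[g_1^g, g_1] = 1$ or $[g_2^g, g_2] = 1$ or $[g_3^g, g_3] = 1$; (2) $[g_1^g, g_2] = [g_1^g, g_3] = [g_2^g, g_1] = [g_2^g, g_3] = [g_3^g, g_1] = [g_3^g, g_2] = 1$. In particular, for every $g \in G$ there exist $i, j \in \{1,2,3\}$ such that $[g_i^g, g_j] = 1$.
   Context: If $e$ is an edge of $\mathcal{T}$ and $v$ a vertex of $e$, the half-tree determined by $(e,v)$ is the subtree spanned by the vertices whose projection onto $e$ equals $v$. An element is supported in a half-tree $A$ if it fixes pointwise the complement of $A$. Notation: $h^g = g h g^{-1}$ and $[g,h] = g h g^{-1} h^{-1}$. *)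

theory Defs
  imports Main
begin

definition walk :: "('v \<Rightarrow> 'v \<Rightarrow> bool) \<Rightarrow> 'v list \<Rightarrow> bool" where
  "walk E xs \<longleftrightarrow> xs \<noteq> [] \<and> (\<forall>i. Suc i < length xs \<longrightarrow> E (xs ! i) (xs ! Suc i))"

definition is_cycle :: "('v \<Rightarrow> 'v \<Rightarrow> bool) \<Rightarrow> 'v list \<Rightarrow> bool" where
  "is_cycle E xs \<longleftrightarrow> length xs \<ge> 3 \<and> distinct xs \<and> walk E xs \<and> E (last xs) (hd xs)"

definition simplicial_tree :: "('v \<Rightarrow> 'v \<Rightarrow> bool) \<Rightarrow> bool" where
  "simplicial_tree E \<longleftrightarrow>
     (\<forall>x y. E x y \<longrightarrow> E y x) \<and> (\<forall>x. \<not> E x x) \<and>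
     (\<forall>u v. \<exists>xs. walk E xs \<and> hd xs = u \<and> last xs = v) \<and>
     (\<nexists>xs. is_cycle E xs)"

definition tdist :: "('v \<Rightarrow> 'v \<Rightarrow> bool) \<Rightarrow> 'v \<Rightarrow> 'v \<Rightarrow> nat" where
  "tdist E u v = (LEAST n. \<exists>xs. walk E xs \<and> hd xs = u \<and> last xs = v \<and> length xs = Suc n)"

definition tree_aut :: "('v \<Rightarrow> 'v \<Rightarrow> bool) \<Rightarrow> ('v \<Rightarrow> 'v) set" where
  "tree_aut E = {f. bij f \<and> (\<forall>x y. E x y \<longleftrightarrow> E (f x) (f y))}"

definition proj_edge :: "('v \<Rightarrow> 'v \<Rightarrow> bool) \<Rightarrow> 'v \<Rightarrow> 'v \<Rightarrow> 'v \<Rightarrow> 'v" where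
  "proj_edge E v w x = (if tdist E x v \<le> tdist E x w then v else w)"

definition half_tree :: "('v \<Rightarrow> 'v \<Rightarrow> bool) \<Rightarrow> 'v \<Rightarrow> 'v \<Rightarrow> 'v set" where
  "half_tree E v w = {x. proj_edge E v w x = v}"

definition is_half_tree :: "('v \<Rightarrow> 'v \<Rightarrow> bool) \<Rightarrow> 'v set \<Rightarrow> bool" where
  "is_half_tree E A \<longleftrightarrow> (\<exists>v w. E v w \<and> A = half_tree E v w)"

definition supported_in :: "('v \<Rightarrow> 'v) \<Rightarrow> 'v set \<Rightarrow> bool" where
  "supported_in f A \<longleftrightarrow> (\<forall>x. x \<notin> A \<longrightarrow> f x = x)"

text \<open>h^g = g h g^{-1}, [g,h] = g h g^{-1} h^{-1} (composition of maps).\<close>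
definition conjg :: "('v \<Rightarrow> 'v) \<Rightarrow> ('v \<Rightarrow> 'v) \<Rightarrow> ('v \<Rightarrow> 'v)" where
  "conjg g h = g \<circ> h \<circ> inv g"

definition commg :: "('v \<Rightarrow> 'v) \<Rightarrow> ('v \<Rightarrow> 'v) \<Rightarrow> ('v \<Rightarrow> 'v)" where
  "commg g h = g \<circ> h \<circ> inv g \<circ> inv h"

end

theory Submission
  imports Defs "HOL-Library.Transitive_Closure_Table"
begin

(* Two half-trees are disjoint, nested, or cover the whole tree, and automorphisms map
   half-trees to half-trees. Moreover h^g is supported in g A when h is supported in A, and
   bijections with disjoint supports commute. Put B_i = g A_i. If some B_i misses A_i, then
   g_i^g commutes with g_i. Otherwise every B_i meets A_i, and for i \<noteq> j the trichotomy
   forces B_i \<inter> A_j = {}: B_i \<subseteq> A_j fails because B_i meets A_i, A_j \<subseteq> B_i fails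
   because A_j meets B_j, and B_i \<union> A_j is not everything because B_k \<inter> A_k avoids both.
   Hence g_i^g commutes with g_j for all i \<noteq> j. *)

section \<open>Walks, paths and distance\<close>

lemma walk_iff_successively: "walk E xs \<longleftrightarrow> xs \<noteq> [] \<and> successively E xs"
  unfolding walk_def successively_conv_nth ..

lemma rtrancl_path_iff_walk:
  "rtrancl_path r x xs y \<longleftrightarrow> walk r (x # xs) \<and> last (x # xs) = y"
proof (induction xs arbitrary: x)
  case Nil
  show ?case by (auto simp: walk_iff_successively elim: rtrancl_path.cases intro: rtrancl_path.base)
next
  case (Cons z zs)
  have "rtrancl_path r x (z # zs) y \<longleftrightarrow> r x z \<and> rtrancl_path r z zs y"
    by (auto elim: rtrancl_path.cases intro: rtrancl_path.step)
  then show ?case using Cons.IH by (simp add: walk_iff_successively)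
qed

lemma tdist_eq_Least: "tdist E x y = (LEAST n. \<exists>xs. rtrancl_path E x xs y \<and> length xs = n)"
proof -
  have "(\<exists>zs. walk E zs \<and> hd zs = x \<and> last zs = y \<and> length zs = Suc n) \<longleftrightarrow>
        (\<exists>xs. rtrancl_path E x xs y \<and> length xs = n)" for n
  proof
    assume "\<exists>zs. walk E zs \<and> hd zs = x \<and> last zs = y \<and> length zs = Suc n"
    then obtain zs where "walk E zs" "hd zs = x" "last zs = y" "length zs = Suc n" by blast
    then show "\<exists>xs. rtrancl_path E x xs y \<and> length xs = n"
      by (intro exI[of _ "tl zs"]) (cases zs; simp add: rtrancl_path_iff_walk)
  qed (auto simp: rtrancl_path_iff_walk)
  then show ?thesis by (simp add: tdist_def)
qed

lemma tdist_le: "rtrancl_path E x xs y \<Longrightarrow> tdist E x y \<le> length xs"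
  unfolding tdist_eq_Least by (rule Least_le) blast

lemma rtrancl_path_tdist:
  assumes "E\<^sup>*\<^sup>* x y"
  obtains xs where "rtrancl_path E x xs y" "length xs = tdist E x y"
proof -
  from assms obtain xs where "rtrancl_path E x xs y" by (auto simp: rtranclp_eq_rtrancl_path)
  then have "\<exists>n xs. rtrancl_path E x xs y \<and> length xs = n" by blast
  from LeastI_ex[OF this] show thesis
    unfolding tdist_eq_Least[symmetric] by (elim exE conjE that)
qed

section \<open>Half-trees as components\<close>

definition del_edge :: "('v \<Rightarrow> 'v \<Rightarrow> bool) \<Rightarrow> 'v \<Rightarrow> 'v \<Rightarrow> 'v \<Rightarrow> 'v \<Rightarrow> bool" where
  "del_edge E v w x y \<longleftrightarrow> E x y \<and> {x, y} \<noteq> {v, w}"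

(* The half-tree of ({v, w}, v), described as the component of v once the edge is deleted. *)
definition side :: "('v \<Rightarrow> 'v \<Rightarrow> bool) \<Rightarrow> 'v \<Rightarrow> 'v \<Rightarrow> 'v set" where
  "side E v w = {x. (del_edge E v w)\<^sup>*\<^sup>* x v}"

lemma del_edge_commute: "del_edge E w v = del_edge E v w"
  unfolding del_edge_def by (auto simp: fun_eq_iff insert_commute)

lemma del_edge_reaches_endpoint:
  assumes "E\<^sup>*\<^sup>* x v"
  shows "(del_edge E v w)\<^sup>*\<^sup>* x v \<or> (del_edge E v w)\<^sup>*\<^sup>* x w"
  using assms
proof (induction rule: converse_rtranclp_induct)
  case (step x y)
  show ?case
  proof (cases "del_edge E v w x y")
    case True
    with step.IH show ?thesis by (meson converse_rtranclp_into_rtranclp)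
  next
    case False
    with step.hyps have "x = v \<or> x = w" by (auto simp: del_edge_def doubleton_eq_iff)
    then show ?thesis by auto
  qed
qed simp

lemma rtrancl_path_del_edge_or_shorter:
  assumes "rtrancl_path E x xs y"
  shows "rtrancl_path (del_edge E v w) x xs y \<or>
    (\<exists>ys z. z \<in> {v, w} \<and> rtrancl_path (del_edge E v w) x ys z \<and> length ys < length xs)"
  using assms
proof induction
  case (base x)
  then show ?case by (simp add: rtrancl_path.base)
next
  case (step x y ys z)
  show ?case
  proof (cases "del_edge E v w x y")
    case True
    with step.IH show ?thesis by (fastforce intro: rtrancl_path.step)
  next
    case False
    with step.hyps have "x \<in> {v, w}" by (auto simp: del_edge_def doubleton_eq_iff)
    then show ?thesis by (intro disjI2 exI[of _ "[]"] exI[of _ x]) (auto intro: rtrancl_path.base)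
  qed
qed

context
  fixes E :: "'v \<Rightarrow> 'v \<Rightarrow> bool"
  assumes tree: "simplicial_tree E"
begin

lemma tree_sym: "E x y \<Longrightarrow> E y x"
  and tree_irrefl: "\<not> E x x"
  and tree_connected: "E\<^sup>*\<^sup>* x y"
  and tree_no_cycle: "\<not> is_cycle E xs"
proof -
  show "E x y \<Longrightarrow> E y x" "\<not> E x x" "\<not> is_cycle E xs"
    using tree by (auto simp: simplicial_tree_def)
  obtain zs where "walk E zs" "hd zs = x" "last zs = y"
    using tree unfolding simplicial_tree_def by blast
  then have "rtrancl_path E x (tl zs) y"
    by (cases zs) (auto simp: rtrancl_path_iff_walk walk_iff_successively)
  then show "E\<^sup>*\<^sup>* x y" by (auto simp: rtranclp_eq_rtrancl_path)
qed

lemma symp_del_edge: "symp (del_edge E v w)"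
  by (auto intro!: sympI simp: del_edge_def tree_sym insert_commute)

lemma not_rtranclp_del_edge:
  assumes "E v w"
  shows "\<not> (del_edge E v w)\<^sup>*\<^sup>* v w"
proof
  assume "(del_edge E v w)\<^sup>*\<^sup>* v w"
  then obtain xs where path: "rtrancl_path (del_edge E v w) v xs w" and "distinct (v # xs)"
    by (auto simp: rtranclp_eq_rtrancl_path elim: rtrancl_path_distinct)
  have "v \<noteq> w" using assms tree_irrefl by blast
  have "xs \<noteq> [w]"
  proof
    assume "xs = [w]"
    with path have "del_edge E v w v w" by (auto elim: rtrancl_path.cases)
    then show False by (simp add: del_edge_def)
  qed
  with path \<open>v \<noteq> w\<close> have long: "length (v # xs) \<ge> 3"
    by (cases xs rule: remdups_adj.cases) (auto simp: rtrancl_path_iff_walk)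
  have "rtrancl_path E v xs w"
    using path by (rule rtrancl_path_mono) (simp add: del_edge_def)
  then have "walk E (v # xs)" "last (v # xs) = w" by (simp_all add: rtrancl_path_iff_walk)
  moreover have "E w v" using assms by (rule tree_sym)
  ultimately have "is_cycle E (v # xs)"
    using long \<open>distinct (v # xs)\<close> by (simp add: is_cycle_def)
  then show False using tree_no_cycle by blast
qed

lemma side_swap_eq_Compl:
  assumes "E v w"
  shows "side E w v = - side E v w"
proof -
  let ?D = "del_edge E v w"
  have False if xv: "?D\<^sup>*\<^sup>* x v" and xw: "?D\<^sup>*\<^sup>* x w" for x
  proof -
    have "?D\<^sup>*\<^sup>* v x" using symp_rtranclp[OF symp_del_edge] xv by (rule sympD)
    then have "?D\<^sup>*\<^sup>* v w" using xw by (rule rtranclp_trans)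
    then show False using not_rtranclp_del_edge[OF assms] by blast
  qed
  moreover have "?D\<^sup>*\<^sup>* x v \<or> ?D\<^sup>*\<^sup>* x w" for x
    by (rule del_edge_reaches_endpoint[OF tree_connected])
  ultimately show ?thesis unfolding side_def del_edge_commute[of E w v] by blast
qed

(* A geodesic from x to w must cross the edge {v, w}; the part before the crossing is a
   shorter path that ends at v. *)
lemma tdist_less_if_in_side:
  assumes "E v w" and "x \<in> side E v w"
  shows "tdist E x v < tdist E x w"
proof -
  obtain xs where xs: "rtrancl_path E x xs w" "length xs = tdist E x w"
    by (rule rtrancl_path_tdist[OF tree_connected])
  have "x \<notin> side E w v" using side_swap_eq_Compl[OF assms(1)] assms(2) by blast
  then have "\<not> rtrancl_path (del_edge E v w) x ys w" for ys
    unfolding side_def del_edge_commute[of E w v] rtranclp_eq_rtrancl_path by blast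
  with rtrancl_path_del_edge_or_shorter[OF xs(1), of v w]
  obtain ys where ys: "rtrancl_path (del_edge E v w) x ys v" "length ys < length xs"
    by blast
  have "rtrancl_path E x ys v" using ys(1) by (rule rtrancl_path_mono) (simp add: del_edge_def)
  then have "tdist E x v \<le> length ys" by (rule tdist_le)
  with ys(2) xs(2) show ?thesis by simp
qed

lemma half_tree_eq_side:
  assumes "E v w"
  shows "half_tree E v w = side E v w"
proof -
  have "E w v" using assms tree_sym by blast
  have "x \<in> side E v w \<longleftrightarrow> tdist E x v \<le> tdist E x w" for x
  proof
    show "tdist E x v \<le> tdist E x w" if "x \<in> side E v w"
      using tdist_less_if_in_side[OF assms that] by simp
    show "x \<in> side E v w" if "tdist E x v \<le> tdist E x w"
    proof (rule ccontr)
      assume "x \<notin> side E v w"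
      then have "x \<in> side E w v" using side_swap_eq_Compl[OF assms] by blast
      from tdist_less_if_in_side[OF \<open>E w v\<close> this] that show False by simp
    qed
  qed
  moreover have "v \<noteq> w" using assms tree_irrefl by blast
  ultimately show ?thesis unfolding half_tree_def proj_edge_def by auto
qed

(* No path inside side E v w passes through a, hence none uses the edge {a, b}: the whole
   side lies in one component of the forest without {a, b}. *)
lemma side_subset_or_disjoint:
  assumes "E v w" "E a b" "a \<notin> side E v w"
  shows "side E v w \<subseteq> side E a b \<or> side E v w \<inter> side E a b = {}"
proof -
  let ?D = "del_edge E v w" and ?D' = "del_edge E a b"
  have to_v: "?D'\<^sup>*\<^sup>* x v" if "x \<in> side E v w" for x
  proof -
    from that have "?D\<^sup>*\<^sup>* x v" by (simp add: side_def)
    then show ?thesis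
    proof (induction rule: converse_rtranclp_induct)
      case (step x y)
      have "?D\<^sup>*\<^sup>* x v" using step.hyps by (rule converse_rtranclp_into_rtranclp)
      then have "x \<in> side E v w" "y \<in> side E v w" using step.hyps(2) by (simp_all add: side_def)
      then have "x \<noteq> a" "y \<noteq> a" using assms(3) by blast+
      then have "?D' x y" using step.hyps(1) by (simp add: del_edge_def doubleton_eq_iff)
      then show ?case using step.IH by (rule converse_rtranclp_into_rtranclp)
    qed simp
  qed
  show ?thesis
  proof (cases "v \<in> side E a b")
    case True
    have "side E v w \<subseteq> side E a b"
    proof
      fix x assume "x \<in> side E v w"
      with True have "?D'\<^sup>*\<^sup>* x v" "?D'\<^sup>*\<^sup>* v a" by (simp_all add: to_v side_def)
      then show "x \<in> side E a b" unfolding side_def by (simp add: rtranclp_trans[of _ x v])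
    qed
    then show ?thesis ..
  next
    case False
    then have "v \<in> side E b a" using side_swap_eq_Compl[OF assms(2)] by blast
    have "side E v w \<subseteq> side E b a"
    proof
      fix x assume "x \<in> side E v w"
      with \<open>v \<in> side E b a\<close> have "?D'\<^sup>*\<^sup>* x v" "?D'\<^sup>*\<^sup>* v b"
        by (simp_all add: to_v side_def del_edge_commute[of E b a])
      then show "x \<in> side E b a"
        unfolding side_def del_edge_commute[of E b a] by (simp add: rtranclp_trans[of _ x v])
    qed
    then show ?thesis using side_swap_eq_Compl[OF assms(2)] by blast
  qed
qed

lemma side_trichotomy:
  assumes "E v w" "E a b"
  shows "side E v w \<inter> side E a b = {} \<or> side E v w \<subseteq> side E a b \<or>
    side E a b \<subseteq> side E v w \<or> side E v w \<union> side E a b = UNIV"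
proof (cases "a \<in> side E v w")
  case True
  have "E w v" using assms(1) by (rule tree_sym)
  moreover have "a \<notin> side E w v" using True side_swap_eq_Compl[OF assms(1)] by blast
  ultimately have "side E w v \<subseteq> side E a b \<or> side E w v \<inter> side E a b = {}"
    by (rule side_subset_or_disjoint[OF _ assms(2)])
  then show ?thesis using side_swap_eq_Compl[OF assms(1)] by blast
next
  case False
  then show ?thesis using side_subset_or_disjoint[OF assms] by blast
qed

lemma half_tree_trichotomy:
  assumes "is_half_tree E X" "is_half_tree E Y"
  shows "X \<inter> Y = {} \<or> X \<subseteq> Y \<or> Y \<subseteq> X \<or> X \<union> Y = UNIV"
proof -
  obtain v w a b where "E v w" "X = half_tree E v w" "E a b" "Y = half_tree E a b"
    using assms unfolding is_half_tree_def by blast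
  then show ?thesis using side_trichotomy[of v w a b] by (simp add: half_tree_eq_side)
qed

end

lemma tree_aut_inv:
  assumes "g \<in> tree_aut E"
  shows "inv g \<in> tree_aut E"
proof -
  have "bij g" and E_g: "\<And>x y. E x y \<longleftrightarrow> E (g x) (g y)" using assms by (auto simp: tree_aut_def)
  have "E (inv g x) (inv g y) \<longleftrightarrow> E x y" for x y
    using E_g[of "inv g x" "inv g y"] bij_inv_eq_iff[OF \<open>bij g\<close>] by metis
  then show ?thesis using \<open>bij g\<close> by (simp add: tree_aut_def bij_imp_bij_inv)
qed

lemma del_edge_tree_aut:
  assumes "g \<in> tree_aut E"
  shows "del_edge E (g v) (g w) (g x) (g y) \<longleftrightarrow> del_edge E v w x y"
proof -
  have "inj g" and "E (g x) (g y) \<longleftrightarrow> E x y" using assms by (auto simp: tree_aut_def bij_def)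
  moreover have "{g x, g y} = {g v, g w} \<longleftrightarrow> {x, y} = {v, w}"
    using inj_image_eq_iff[OF \<open>inj g\<close>, of "{x, y}" "{v, w}"] by simp
  ultimately show ?thesis by (simp add: del_edge_def)
qed

lemma image_side_subset:
  assumes "g \<in> tree_aut E"
  shows "g ` side E v w \<subseteq> side E (g v) (g w)"
proof
  fix y assume "y \<in> g ` side E v w"
  then obtain x where "y = g x" "(del_edge E v w)\<^sup>*\<^sup>* x v" by (auto simp: side_def)
  moreover have "(del_edge E (g v) (g w))\<^sup>*\<^sup>* (g x) (g v)" if "(del_edge E v w)\<^sup>*\<^sup>* x v" for x
    using that
  proof (induction rule: converse_rtranclp_induct)
    case (step x z)
    then show ?case
      by (metis converse_rtranclp_into_rtranclp del_edge_tree_aut[OF assms])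
  qed simp
  ultimately show "y \<in> side E (g v) (g w)" by (simp add: side_def)
qed

lemma image_side:
  assumes "g \<in> tree_aut E"
  shows "g ` side E v w = side E (g v) (g w)"
proof
  have "bij g" using assms by (simp add: tree_aut_def)
  show "side E (g v) (g w) \<subseteq> g ` side E v w"
  proof
    fix y assume "y \<in> side E (g v) (g w)"
    then have "inv g y \<in> side E (inv g (g v)) (inv g (g w))"
      using image_side_subset[OF tree_aut_inv[OF assms]] by blast
    then have "inv g y \<in> side E v w" using bij_is_inj[OF \<open>bij g\<close>] by simp
    moreover have "y = g (inv g y)" using \<open>bij g\<close> by (simp add: bij_is_surj surj_f_inv_f)
    ultimately show "y \<in> g ` side E v w" by blast
  qed
qed (rule image_side_subset[OF assms])

lemma is_half_tree_image:
  assumes "simplicial_tree E" "g \<in> tree_aut E" "is_half_tree E X"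
  shows "is_half_tree E (g ` X)"
proof -
  obtain v w where "E v w" "X = half_tree E v w" using assms(3) by (auto simp: is_half_tree_def)
  moreover have "E (g v) (g w)" using \<open>E v w\<close> assms(2) by (simp add: tree_aut_def)
  ultimately have "g ` X = half_tree E (g v) (g w)"
    using half_tree_eq_side[OF assms(1)] image_side[OF assms(2)] by simp
  with \<open>E (g v) (g w)\<close> show ?thesis by (auto simp: is_half_tree_def)
qed

section \<open>Supports and commutators\<close>

lemma supported_in_conjg:
  assumes "bij g" "supported_in h A"
  shows "supported_in (conjg g h) (g ` A)"
  unfolding supported_in_def
proof (intro allI impI)
  fix x assume "x \<notin> g ` A"
  then have "inv g x \<notin> A" using assms(1) by (metis bij_inv_eq_iff image_eqI)
  then have "h (inv g x) = inv g x" using assms(2) by (simp add: supported_in_def)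
  then show "conjg g h x = x" using assms(1) by (simp add: conjg_def bij_inv_eq_iff)
qed

lemma supported_in_mapsto:
  assumes "inj f" "supported_in f X" "x \<in> X"
  shows "f x \<in> X"
proof (rule ccontr)
  assume "f x \<notin> X"
  then have "f (f x) = f x" using assms(2) by (simp add: supported_in_def)
  then have "f x = x" using assms(1) by (simp add: inj_eq)
  with \<open>f x \<notin> X\<close> assms(3) show False by simp
qed

lemma commute_if_disjoint_supports:
  assumes "inj f" "inj h" "supported_in f X" "supported_in h Y" "X \<inter> Y = {}"
  shows "f \<circ> h = h \<circ> f"
proof
  fix x
  consider "x \<in> X" | "x \<in> Y" | "x \<notin> X" "x \<notin> Y" by blast
  then show "(f \<circ> h) x = (h \<circ> f) x"
  proof cases
    case 1
    then have "f x \<in> X" using assms(1,3) by (rule supported_in_mapsto[rotated -1])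
    with 1 have "x \<notin> Y" "f x \<notin> Y" using assms(5) by blast+
    then show ?thesis using assms(4) by (simp add: supported_in_def)
  next
    case 2
    then have "h x \<in> Y" using assms(2,4) by (rule supported_in_mapsto[rotated -1])
    with 2 have "x \<notin> X" "h x \<notin> X" using assms(5) by blast+
    then show ?thesis using assms(3) by (simp add: supported_in_def)
  qed (use assms(3,4) in \<open>simp add: supported_in_def\<close>)
qed

lemma commg_eq_id_if_commute:
  assumes "bij f" "bij h" "f \<circ> h = h \<circ> f"
  shows "commg f h = id"
proof -
  have "commg f h = h \<circ> (f \<circ> inv f) \<circ> inv h"
    unfolding commg_def using assms(3) by (simp add: comp_assoc)
  also have "\<dots> = id"
    using assms(1,2) bij_is_surj surj_iff by (metis comp_id)
  finally show ?thesis .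
qed

lemma commg_conjg_eq_id:
  assumes "bij g" "bij h" "bij k" "supported_in h A" "supported_in k B" "g ` A \<inter> B = {}"
  shows "commg (conjg g h) k = id"
proof -
  have "bij (conjg g h)" using assms(1,2) by (simp add: conjg_def bij_comp bij_imp_bij_inv)
  moreover have "supported_in (conjg g h) (g ` A)" using assms(1,4) by (rule supported_in_conjg)
  ultimately have "conjg g h \<circ> k = k \<circ> conjg g h"
    using assms(3,5,6) by (intro commute_if_disjoint_supports) (auto simp: bij_is_inj)
  with \<open>bij (conjg g h)\<close> assms(3) show ?thesis by (rule commg_eq_id_if_commute)
qed

(* X' rules out X \<subseteq> Y, Y' rules out Y \<subseteq> X, and a point of Z \<inter> Z' rules out X \<union> Y = UNIV. *)
lemma disjoint_if_trichotomous:
  assumes "X \<inter> Y = {} \<or> X \<subseteq> Y \<or> Y \<subseteq> X \<or> X \<union> Y = UNIV"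
    and "X \<inter> X' \<noteq> {}" "X' \<inter> Y = {}"
    and "Y \<inter> Y' \<noteq> {}" "Y' \<inter> X = {}"
    and "Z \<inter> Z' \<noteq> {}" "Z \<inter> X = {}" "Z' \<inter> Y = {}"
  shows "X \<inter> Y = {}"
  using assms by blast

lemma off_diagonal_disjoint:
  assumes trichotomy: "\<And>X Y. X \<in> {B1, B2, B3} \<Longrightarrow> Y \<in> {A1, A2, A3} \<Longrightarrow>
      X \<inter> Y = {} \<or> X \<subseteq> Y \<or> Y \<subseteq> X \<or> X \<union> Y = UNIV"
    and "A1 \<inter> A2 = {}" "A1 \<inter> A3 = {}" "A2 \<inter> A3 = {}"
    and "B1 \<inter> B2 = {}" "B1 \<inter> B3 = {}" "B2 \<inter> B3 = {}"
    and "B1 \<inter> A1 \<noteq> {}" "B2 \<inter> A2 \<noteq> {}" "B3 \<inter> A3 \<noteq> {}"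
  shows "B1 \<inter> A2 = {} \<and> B1 \<inter> A3 = {} \<and> B2 \<inter> A1 = {} \<and>
    B2 \<inter> A3 = {} \<and> B3 \<inter> A1 = {} \<and> B3 \<inter> A2 = {}"
proof -
  have "B1 \<inter> A2 = {}"
    using disjoint_if_trichotomous[OF trichotomy[of B1 A2], of A1 B2 B3 A3] assms(2-)
    by (simp add: Int_commute)
  moreover have "B1 \<inter> A3 = {}"
    using disjoint_if_trichotomous[OF trichotomy[of B1 A3], of A1 B3 B2 A2] assms(2-)
    by (simp add: Int_commute)
  moreover have "B2 \<inter> A1 = {}"
    using disjoint_if_trichotomous[OF trichotomy[of B2 A1], of A2 B1 B3 A3] assms(2-)
    by (simp add: Int_commute)
  moreover have "B2 \<inter> A3 = {}"
    using disjoint_if_trichotomous[OF trichotomy[of B2 A3], of A2 B3 B1 A1] assms(2-)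
    by (simp add: Int_commute)
  moreover have "B3 \<inter> A1 = {}"
    using disjoint_if_trichotomous[OF trichotomy[of B3 A1], of A3 B1 B2 A2] assms(2-)
    by (simp add: Int_commute)
  moreover have "B3 \<inter> A2 = {}"
    using disjoint_if_trichotomous[OF trichotomy[of B3 A2], of A3 B2 B1 A1] assms(2-)
    by (simp add: Int_commute)
  ultimately show ?thesis by blast
qed

lemma conjugate_commutation:
  assumes tree: "simplicial_tree E" and "g \<in> tree_aut E"
    and "g1 \<in> tree_aut E" "g2 \<in> tree_aut E" "g3 \<in> tree_aut E"
    and half: "is_half_tree E A1" "is_half_tree E A2" "is_half_tree E A3"
    and disj: "A1 \<inter> A2 = {}" "A1 \<inter> A3 = {}" "A2 \<inter> A3 = {}"
    and supp: "supported_in g1 A1" "supported_in g2 A2" "supported_in g3 A3"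
  shows "((commg (conjg g g1) g1 = id \<or> commg (conjg g g2) g2 = id \<or> commg (conjg g g3) g3 = id) \<or>
      (commg (conjg g g1) g2 = id \<and> commg (conjg g g1) g3 = id \<and>
       commg (conjg g g2) g1 = id \<and> commg (conjg g g2) g3 = id \<and>
       commg (conjg g g3) g1 = id \<and> commg (conjg g g3) g2 = id))
     \<and> (\<exists>i\<in>{1::nat,2,3}. \<exists>j\<in>{1::nat,2,3}.
          commg (conjg g ([g1,g2,g3] ! (i-1))) ([g1,g2,g3] ! (j-1)) = id)"
    (is "?dichotomy \<and> ?some_pair")
proof -
  have bij: "bij g" "bij g1" "bij g2" "bij g3" using assms(2-5) by (simp_all add: tree_aut_def)
  note comm = commg_conjg_eq_id[OF \<open>bij g\<close>]
  have ?dichotomy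
  proof (cases "g ` A1 \<inter> A1 = {} \<or> g ` A2 \<inter> A2 = {} \<or> g ` A3 \<inter> A3 = {}")
    case True
    then show ?thesis using comm[OF bij(2,2) supp(1,1)] comm[OF bij(3,3) supp(2,2)]
        comm[OF bij(4,4) supp(3,3)] by blast
  next
    case False
    have "is_half_tree E (g ` A1)" "is_half_tree E (g ` A2)" "is_half_tree E (g ` A3)"
      using is_half_tree_image[OF tree assms(2)] half by simp_all
    with half have half_all: "is_half_tree E X"
      if "X \<in> {g ` A1, g ` A2, g ` A3, A1, A2, A3}" for X
      using that by blast
    have trichotomy: "X \<inter> Y = {} \<or> X \<subseteq> Y \<or> Y \<subseteq> X \<or> X \<union> Y = UNIV"
      if "X \<in> {g ` A1, g ` A2, g ` A3}" "Y \<in> {A1, A2, A3}" for X Y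
      using that by (intro half_tree_trichotomy[OF tree] half_all) auto
    have disj_image: "g ` A1 \<inter> g ` A2 = {}" "g ` A1 \<inter> g ` A3 = {}" "g ` A2 \<inter> g ` A3 = {}"
      using disj bij_is_inj[OF \<open>bij g\<close>] by (simp_all add: image_Int[symmetric])
    have "g ` A1 \<inter> A2 = {} \<and> g ` A1 \<inter> A3 = {} \<and> g ` A2 \<inter> A1 = {} \<and>
        g ` A2 \<inter> A3 = {} \<and> g ` A3 \<inter> A1 = {} \<and> g ` A3 \<inter> A2 = {}"
      using False by (intro off_diagonal_disjoint[OF trichotomy disj disj_image]) auto
    then show ?thesis
      using comm[OF bij(2,3) supp(1,2)] comm[OF bij(2,4) supp(1,3)] comm[OF bij(3,2) supp(2,1)]
        comm[OF bij(3,4) supp(2,3)] comm[OF bij(4,2) supp(3,1)] comm[OF bij(4,3) supp(3,2)]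
      by blast
  qed
  moreover from this have ?some_pair by auto
  ultimately show ?thesis ..
qed

theorem lemma3p6:
  fixes E :: "'v \<Rightarrow> 'v \<Rightarrow> bool" and G :: "('v \<Rightarrow> 'v) set"
    and g1 g2 g3 :: "'v \<Rightarrow> 'v" and A1 A2 A3 :: "'v set"
  assumes tree: "simplicial_tree E"
    and G_sub: "G \<subseteq> tree_aut E" and G_id: "id \<in> G"
    and G_mult: "\<And>f h. f \<in> G \<Longrightarrow> h \<in> G \<Longrightarrow> f \<circ> h \<in> G"
    and G_inv: "\<And>f. f \<in> G \<Longrightarrow> inv f \<in> G"
    and g_in: "g1 \<in> G" "g2 \<in> G" "g3 \<in> G"
    and A_half: "is_half_tree E A1" "is_half_tree E A2" "is_half_tree E A3"
    and A_disj: "A1 \<inter> A2 = {}" "A1 \<inter> A3 = {}" "A2 \<inter> A3 = {}"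
    and supp: "supported_in g1 A1" "supported_in g2 A2" "supported_in g3 A3"
  shows "\<forall>g\<in>G.
     ((commg (conjg g g1) g1 = id \<or> commg (conjg g g2) g2 = id \<or> commg (conjg g g3) g3 = id) \<or>
      (commg (conjg g g1) g2 = id \<and> commg (conjg g g1) g3 = id \<and>
       commg (conjg g g2) g1 = id \<and> commg (conjg g g2) g3 = id \<and>
       commg (conjg g g3) g1 = id \<and> commg (conjg g g3) g2 = id))
     \<and> (\<exists>i\<in>{1::nat,2,3}. \<exists>j\<in>{1::nat,2,3}.
          commg (conjg g ([g1,g2,g3] ! (i-1))) ([g1,g2,g3] ! (j-1)) = id)"
  (* Only G \<subseteq> Aut(T) is needed. *)
  using conjugate_commutation[OF tree _ _ _ _ A_half A_disj supp] G_sub g_in by blast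

end
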